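(* Let $\mathcal{S}$ be a locating-dominating set of $G_{2,m}=P_2\square P_m$, with vertices labeled $v_1,\dots,v_{2m}$ as described in the context. Suppose there is a $(2\times 4)$-block $\mathcal{B}$ of $G_{2,m}$ consisting of the vertices $v_i,\dots,v_{i+7}$ such that $|\mathcal{B}\cap\mathcal{S}|=2$. Then $i\neq 1$, $i+7\neq 2m$, and $v_{i-2},v_{i-1},v_{i+8},v_{i+9}\in\mathcal{S}$.
   Context: $P_n$ is the path on $n$ vertices, $\square$ the Cartesian product, and $G_{n,m}=P_n\square P_m$ is viewed as a grid with $n$ rows and $m$ columns. Vertices are labeled column by column: the vertex in row $r$ ($1\le r\le n$) and column $c$ ($1\le c\le m$) is $v_{r+n(c-1)}$; vertices in the same column (or same row, adjacent columns) are adjacent as in the grid. A $(n\times \ell)$-block is the set of vertices in $\ell$ consecutive columns. For $C\subseteq V(G)$ and $v\in V(G)$ let $I(v)=N[v]\cap C$ ($N[v]$ the closed neighborhood). $C$ is a locating-dominating set if $I(v)\neq\emptyset$ for all $v\in V(G)\setminus C$ and $I(u)\neq I(v)$ for all distinct $u,v\in V(G)\setminus C$. *)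

theory Defs
  imports Main
begin

text \<open>Grid graph G_{n,m} = P_n \<box> P_m, vertices v_1..v_{nm} encoded by their index k;
  v_k lies in row ((k-1) mod n)+1 and column ((k-1) div n)+1.\<close>

definition grid_vertices :: "nat \<Rightarrow> nat \<Rightarrow> nat set" where
  "grid_vertices n m = {1..n*m}"

definition grid_row :: "nat \<Rightarrow> nat \<Rightarrow> nat" where
  "grid_row n k = (k - 1) mod n + 1"

definition grid_col :: "nat \<Rightarrow> nat \<Rightarrow> nat" where
  "grid_col n k = (k - 1) div n + 1"

definition grid_adj :: "nat \<Rightarrow> nat \<Rightarrow> nat \<Rightarrow> nat \<Rightarrow> bool" where
  "grid_adj n m u v \<longleftrightarrow> u \<in> grid_vertices n m \<and> v \<in> grid_vertices n m \<and>
     ((grid_col n u = grid_col n v \<and>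
        (grid_row n u = grid_row n v + 1 \<or> grid_row n v = grid_row n u + 1)) \<or>
      (grid_row n u = grid_row n v \<and>
        (grid_col n u = grid_col n v + 1 \<or> grid_col n v = grid_col n u + 1)))"

definition closed_nbhd :: "nat \<Rightarrow> nat \<Rightarrow> nat \<Rightarrow> nat set" where
  "closed_nbhd n m v = {u \<in> grid_vertices n m. u = v \<or> grid_adj n m u v}"

definition locating_dominating :: "nat \<Rightarrow> nat \<Rightarrow> nat set \<Rightarrow> bool" where
  "locating_dominating n m C \<longleftrightarrow> C \<subseteq> grid_vertices n m \<and>
     (\<forall>v \<in> grid_vertices n m - C. closed_nbhd n m v \<inter> C \<noteq> {}) \<and>
     (\<forall>u \<in> grid_vertices n m - C. \<forall>v \<in> grid_vertices n m - C.
        u \<noteq> v \<longrightarrow> closed_nbhd n m u \<inter> C \<noteq> closed_nbhd n m v \<inter> C)"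

definition is_block :: "nat \<Rightarrow> nat \<Rightarrow> nat \<Rightarrow> nat set \<Rightarrow> bool" where
  "is_block n m l B \<longleftrightarrow> (\<exists>c. 1 \<le> c \<and> c + l - 1 \<le> m \<and> B = {n*(c-1)+1 .. n*(c+l-1)})"

end

(*
  Let T be the two vertices of S in the block. A vertex outside S whose closed neighbourhood
  meets S only inside T sees one of the three nonempty subsets of T, and distinct such vertices
  see distinct subsets; so at most three of the six block vertices outside S are of this kind.
  Each of the others sees a vertex of S outside the block, hence is an end vertex of the block
  (first or last column) whose neighbour outside the block lies in S. A short local case analysis
  rules out that only three of the four outer neighbours are reached, so v_{i-2}, v_{i-1},
  v_{i+8}, v_{i+9} all lie in S, and in particular exist.

  Formally, G_{2,m} is embedded in the infinite ladder P_2 \<box> P_\<nat> with the same vertex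
  numbering; the local constraints on the block and its two neighbouring columns then form a
  propositional problem on twelve vertices.
*)

theory Submission
  imports Defs
begin

(* The grid numbering extended to all of \<nat>: odd vertices form the first row and v, v + 1
   (v odd) a column, so G_{2,m} is the subgraph induced by {1..2m}. *)
definition ladder_nbhd :: "nat \<Rightarrow> nat set" where
  "ladder_nbhd v = {u. u = v \<or> u + 2 = v \<or> u = v + 2 \<or> (if odd v then u = v + 1 else u + 1 = v)}"

definition ladder_locating_on :: "nat set \<Rightarrow> nat set \<Rightarrow> bool" where
  "ladder_locating_on B X \<longleftrightarrow>
     (\<forall>v \<in> B - X. ladder_nbhd v \<inter> X \<noteq> {}) \<and>
     (\<forall>u \<in> B - X. \<forall>v \<in> B - X. u \<noteq> v \<longrightarrow> ladder_nbhd u \<inter> X \<noteq> ladder_nbhd v \<inter> X)"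

lemma ladder_locating_on_dominates:
  "ladder_locating_on B X \<Longrightarrow> v \<in> B \<Longrightarrow> v \<notin> X \<Longrightarrow> ladder_nbhd v \<inter> X \<noteq> {}"
  unfolding ladder_locating_on_def by blast

lemma ladder_locating_on_separates:
  "ladder_locating_on B X \<Longrightarrow> u \<in> B \<Longrightarrow> v \<in> B \<Longrightarrow> u \<notin> X \<Longrightarrow> v \<notin> X \<Longrightarrow> u \<noteq> v \<Longrightarrow>
    ladder_nbhd u \<inter> X \<noteq> ladder_nbhd v \<inter> X"
  unfolding ladder_locating_on_def by blast

lemma grid_row_col_2:
  "grid_row 2 (2 * p + 1) = 1" "grid_col 2 (2 * p + 1) = p + 1"
  "grid_row 2 (2 * p + 2) = 2" "grid_col 2 (2 * p + 2) = p + 1"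
  unfolding grid_row_def grid_col_def by simp_all

lemma grid_adj_2_iff:
  assumes "1 \<le> u" and "1 \<le> v"
  shows "grid_adj 2 m u v \<longleftrightarrow>
    u \<in> grid_vertices 2 m \<and> v \<in> grid_vertices 2 m \<and> u \<noteq> v \<and> u \<in> ladder_nbhd v"
proof -
  have "\<exists>p. u = 2 * p + 1 \<or> u = 2 * p + 2" "\<exists>q. v = 2 * q + 1 \<or> v = 2 * q + 2"
    using assms by presburger+
  then obtain p q where "u = 2 * p + 1 \<or> u = 2 * p + 2" "v = 2 * q + 1 \<or> v = 2 * q + 2"
    by blast
  then show ?thesis
    unfolding grid_adj_def ladder_nbhd_def
    by (elim disjE; simp only: grid_row_col_2; simp add: grid_vertices_def; presburger)
qed

lemma closed_nbhd_2_eq: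
  assumes "v \<in> grid_vertices 2 m"
  shows "closed_nbhd 2 m v = ladder_nbhd v \<inter> grid_vertices 2 m"
proof -
  have "u = v \<or> grid_adj 2 m u v \<longleftrightarrow> u \<in> ladder_nbhd v" if "u \<in> grid_vertices 2 m" for u
    using grid_adj_2_iff[of u v m] that assms by (auto simp: grid_vertices_def ladder_nbhd_def)
  then show ?thesis
    unfolding closed_nbhd_def by blast
qed

lemma locating_dominating_2_imp_ladder_locating_on:
  assumes "locating_dominating 2 m S" and "B \<subseteq> grid_vertices 2 m"
  shows "ladder_locating_on B S"
  unfolding ladder_locating_on_def
proof (intro conjI ballI impI)
  have "S \<subseteq> grid_vertices 2 m"
    using assms(1) unfolding locating_dominating_def by blast
  then have trace: "closed_nbhd 2 m v \<inter> S = ladder_nbhd v \<inter> S" if "v \<in> B" for v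
    using closed_nbhd_2_eq that assms(2) by blast
  fix u assume u: "u \<in> B - S"
  then have "closed_nbhd 2 m u \<inter> S \<noteq> {}"
    using assms unfolding locating_dominating_def by blast
  then show "ladder_nbhd u \<inter> S \<noteq> {}"
    using trace u by simp
  fix v assume v: "v \<in> B - S" and "u \<noteq> v"
  then have "closed_nbhd 2 m u \<inter> S \<noteq> closed_nbhd 2 m v \<inter> S"
    using assms u unfolding locating_dominating_def by blast
  then show "ladder_nbhd u \<inter> S \<noteq> ladder_nbhd v \<inter> S"
    using trace u v by simp
qed

lemma ladder_nbhd_shift:
  assumes "even s"
  shows "s + u \<in> ladder_nbhd (s + v) \<longleftrightarrow> u \<in> ladder_nbhd v"
  using assms unfolding ladder_nbhd_def by auto

lemma ladder_nbhd_Int_shift: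
  assumes "even s"
  shows "ladder_nbhd (s + v) \<inter> (+) s ` X = (+) s ` (ladder_nbhd v \<inter> X)"
  using ladder_nbhd_shift[OF assms] by auto

lemma ladder_locating_on_shift:
  assumes "even s" and "ladder_locating_on B X"
  shows "ladder_locating_on ((+) s ` B) ((+) s ` X)"
  unfolding ladder_locating_on_def
proof (intro conjI ballI impI)
  note trace = ladder_nbhd_Int_shift[OF assms(1)]
  fix w assume "w \<in> (+) s ` B - (+) s ` X"
  then obtain v where v: "w = s + v" "v \<in> B - X" by auto
  then show "ladder_nbhd w \<inter> (+) s ` X \<noteq> {}"
    using assms(2) trace unfolding ladder_locating_on_def by auto
  fix w' assume "w' \<in> (+) s ` B - (+) s ` X" "w \<noteq> w'"
  then obtain v' where "w' = s + v'" "v' \<in> B - X" "v \<noteq> v'" using v by auto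
  then show "ladder_nbhd w \<inter> (+) s ` X \<noteq> ladder_nbhd w' \<inter> (+) s ` X"
    using assms(2) v trace unfolding ladder_locating_on_def by (simp add: inj_image_eq_iff)
qed

lemma ladder_locating_on_sparse_block:
  assumes "odd c" and "ladder_locating_on {c + 2..c + 9} X"
    and sparse: "card ({c + 2..c + 9} \<inter> X) \<le> 2"
  shows "{c, c + 1, c + 10, c + 11} \<subseteq> X"
proof -
  have offsets: "{2..9} = {2, 3, 4, 5, 6, 7, 8, 9 :: nat}" by auto
  have nbhd: "ladder_nbhd (c + 2) = {c, c + 2, c + 3, c + 4}"
    "ladder_nbhd (c + 3) = {c + 1, c + 2, c + 3, c + 5}"
    "ladder_nbhd (c + 4) = {c + 2, c + 4, c + 5, c + 6}"
    "ladder_nbhd (c + 5) = {c + 3, c + 4, c + 5, c + 7}"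
    "ladder_nbhd (c + 6) = {c + 4, c + 6, c + 7, c + 8}"
    "ladder_nbhd (c + 7) = {c + 5, c + 6, c + 7, c + 9}"
    "ladder_nbhd (c + 8) = {c + 6, c + 8, c + 9, c + 10}"
    "ladder_nbhd (c + 9) = {c + 7, c + 8, c + 9, c + 11}"
    using assms(1) unfolding ladder_nbhd_def by auto
  have dominated: "\<forall>k \<in> {2..9}. c + k \<notin> X \<longrightarrow> (\<exists>x \<in> ladder_nbhd (c + k). x \<in> X)"
  proof (intro ballI impI)
    fix k :: nat
    assume "k \<in> {2..9}" "c + k \<notin> X"
    then have "ladder_nbhd (c + k) \<inter> X \<noteq> {}"
      by (intro ladder_locating_on_dominates[OF assms(2)]) auto
    then show "\<exists>x \<in> ladder_nbhd (c + k). x \<in> X"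
      by blast
  qed
  have separated: "\<forall>k \<in> {2..9}. \<forall>l \<in> {2..9}. k < l \<longrightarrow> c + k \<notin> X \<longrightarrow> c + l \<notin> X \<longrightarrow>
      (\<exists>x \<in> ladder_nbhd (c + k) \<union> ladder_nbhd (c + l).
         x \<in> X \<and> \<not> (x \<in> ladder_nbhd (c + k) \<longleftrightarrow> x \<in> ladder_nbhd (c + l)))"
  proof (intro ballI impI)
    fix k l :: nat
    assume "k \<in> {2..9}" "l \<in> {2..9}" "k < l" "c + k \<notin> X" "c + l \<notin> X"
    then have "ladder_nbhd (c + k) \<inter> X \<noteq> ladder_nbhd (c + l) \<inter> X"
      by (intro ladder_locating_on_separates[OF assms(2)]) auto
    then show "\<exists>x \<in> ladder_nbhd (c + k) \<union> ladder_nbhd (c + l).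
        x \<in> X \<and> \<not> (x \<in> ladder_nbhd (c + k) \<longleftrightarrow> x \<in> ladder_nbhd (c + l))"
      unfolding set_eq_iff by auto
  qed
  have no_three: "\<forall>a \<in> {2..9}. \<forall>b \<in> {2..9}. \<forall>d \<in> {2..9}. a < b \<longrightarrow> b < d \<longrightarrow>
      \<not> (c + a \<in> X \<and> c + b \<in> X \<and> c + d \<in> X)"
  proof (intro ballI impI notI)
    fix a b d :: nat
    assume "a \<in> {2..9}" "b \<in> {2..9}" "d \<in> {2..9}" "a < b" "b < d"
      and "c + a \<in> X \<and> c + b \<in> X \<and> c + d \<in> X"
    then have "{c + a, c + b, c + d} \<subseteq> {c + 2..c + 9} \<inter> X" by auto
    then have "card {c + a, c + b, c + d} \<le> card ({c + 2..c + 9} \<inter> X)"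
      by (intro card_mono) auto
    with sparse have "card {c + a, c + b, c + d} \<le> 2" by linarith
    with \<open>a < b\<close> \<open>b < d\<close> show False by (simp add: card_insert_if)
  qed
  \<comment> \<open>What remains is propositional in the twelve atoms c + k \<in> X, k \<le> 11.\<close>
  show ?thesis
    using dominated[unfolded offsets ball_simps nbhd, simplified]
      separated[unfolded offsets ball_simps nbhd, simplified]
      no_three[unfolded offsets ball_simps, simplified]
    by (simp (no_asm), argo)
qed

theorem lemma4p4:
  fixes m i :: nat and S :: "nat set"
  assumes "locating_dominating 2 m S"
    and "is_block 2 m 4 {i..i+7}"
    and "card ({i..i+7} \<inter> S) = 2"
  shows "i \<noteq> 1 \<and> i + 7 \<noteq> 2*m \<and> i - 2 \<in> S \<and> i - 1 \<in> S \<and> i + 8 \<in> S \<and> i + 9 \<in> S"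
proof -
  have S_grid: "S \<subseteq> {1..2 * m}"
    using assms(1) unfolding locating_dominating_def grid_vertices_def by blast
  obtain c where "1 \<le> c" "c + 3 \<le> m" "{i..i + 7} = {2 * (c - 1) + 1..2 * (c + 3)}"
    using assms(2) unfolding is_block_def by auto
  then have "i = 2 * c - 1" and block_grid: "{i..i + 7} \<subseteq> grid_vertices 2 m"
    by (auto simp: Icc_eq_Icc grid_vertices_def)
  then have "odd i" using \<open>1 \<le> c\<close> by auto
  \<comment> \<open>Shifting by one column gives the block a left neighbour column even when i = 1;
    that case then fails because X has no vertex below 3.\<close>
  define X where "X = (+) 2 ` S"
  have shift_block: "(+) 2 ` {i..i + 7} = {i + 2..i + 9}"
    unfolding image_add_atLeastAtMost by simp
  have "ladder_locating_on {i..i + 7} S"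
    using locating_dominating_2_imp_ladder_locating_on[OF assms(1) block_grid] .
  then have "ladder_locating_on {i + 2..i + 9} X"
    using ladder_locating_on_shift[of 2 "{i..i + 7}" S] unfolding X_def shift_block by simp
  moreover have "card ({i + 2..i + 9} \<inter> X) \<le> 2"
  proof -
    have "{i + 2..i + 9} \<inter> X = (+) 2 ` ({i..i + 7} \<inter> S)"
      unfolding X_def shift_block[symmetric] by (rule image_Int[OF inj_on_add, symmetric])
    then show ?thesis
      using assms(3) card_image[OF inj_on_add, of 2 "{i..i + 7} \<inter> S"] by simp
  qed
  ultimately have "{i, i + 1, i + 10, i + 11} \<subseteq> X"
    using ladder_locating_on_sparse_block \<open>odd i\<close> by blast
  then have "i - 2 \<in> S" "i - 1 \<in> S" "i + 8 \<in> S" "i + 9 \<in> S"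
    unfolding X_def by auto
  moreover from this have "i \<noteq> 1" "i + 7 \<noteq> 2 * m"
    using S_grid by auto
  ultimately show ?thesis by blast
qed

end
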